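(* Let $\omega$ be an admissible weight on $\mathbb{N}$, and let $\mathcal{A}$ be a commutative unital complex Banach algebra. Then $\mathcal{D}(\mathbb{N},\omega,\mathcal{A})$ is inverse-closed in $\mathcal{D}(\mathbb{N},\mathcal{A})$: if $f\in\mathcal{D}(\mathbb{N},\omega,\mathcal{A})$ is invertible in $\mathcal{D}(\mathbb{N},\mathcal{A})$, then its inverse lies in $\mathcal{D}(\mathbb{N},\omega,\mathcal{A})$.
   Context: $\mathcal{H}=\{s\in\mathbb C:\operatorname{Re}s\geq 0\}$. A weight on $\mathbb N$ (as a multiplicative semigroup) is a map $\omega:\mathbb N\to[1,\infty)$ with $\omega(1)=1$ and $\omega(mn)\le\omega(m)\omega(n)$; it is admissible if $\lim_{k\to\infty}\omega(n^k)^{1/k}=1$ for all $n$. $\mathcal D(\mathbb N,\omega,\mathcal A)$ is the Banach algebra (pointwise multiplication) of functions $f:\mathcal H\to\mathcal A$, $f(s)=\sum_{n}f_n n^{-s}$ with $\sum_n\|f_n\|\omega(n)<\infty$; $\mathcal D(\mathbb N,\mathcal A)$ is the case $\omega\equiv 1$. Both share the unit $f\equiv 1_\mathcal A$. *)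

theory Defs
  imports "HOL-Analysis.Analysis"
begin

text \<open>Commutative unital complex Banach algebras: a real Banach algebra with unit
  and commutative multiplication, equipped with a compatible complex scalar
  multiplication (there is no such class in the library).\<close>

class comm_complex_banach_algebra_1 = real_normed_algebra_1 + banach + comm_ring_1 +
  fixes cscale :: "complex \<Rightarrow> 'a \<Rightarrow> 'a"
  assumes cscale_add_right: "cscale c (x + y) = cscale c x + cscale c y"
    and cscale_add_left: "cscale (b + c) x = cscale b x + cscale c x"
    and cscale_cscale: "cscale b (cscale c x) = cscale (b * c) x"
    and cscale_one: "cscale 1 x = x"
    and scaleR_cscale: "scaleR r x = cscale (complex_of_real r) x"
    and norm_cscale: "norm (cscale c x) = cmod c * norm x"
    and cscale_mult_left: "cscale c x * y = cscale c (x * y)"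

definition half_plane :: "complex set" where
  "half_plane = {s. 0 \<le> Re s}"

text \<open>Weights on the multiplicative semigroup \<open>\<nat> = {1,2,...}\<close>
  (values at 0 are irrelevant).\<close>
definition is_weight :: "(nat \<Rightarrow> real) \<Rightarrow> bool" where
  "is_weight \<omega> \<longleftrightarrow> \<omega> 1 = 1 \<and> (\<forall>n\<ge>1. 1 \<le> \<omega> n)
     \<and> (\<forall>m\<ge>1. \<forall>n\<ge>1. \<omega> (m * n) \<le> \<omega> m * \<omega> n)"

definition admissible_weight :: "(nat \<Rightarrow> real) \<Rightarrow> bool" where
  "admissible_weight \<omega> \<longleftrightarrow> is_weight \<omega> \<and>
     (\<forall>n\<ge>1. (\<lambda>k. \<omega> (n ^ k) powr (1 / real k)) \<longlonglongrightarrow> 1)"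

text \<open>Functions are compared on \<open>\<H>\<close>
  only (values outside \<open>\<H>\<close> are ignored); the coefficient at index 0 is unused
  and set to 0.\<close>
definition dirichlet_alg ::
  "(nat \<Rightarrow> real) \<Rightarrow> (complex \<Rightarrow> 'a::comm_complex_banach_algebra_1) set" where
  "dirichlet_alg \<omega> = {f. \<exists>c :: nat \<Rightarrow> 'a. c 0 = 0 \<and>
      summable (\<lambda>n. norm (c n) * \<omega> n) \<and>
      (\<forall>s\<in>half_plane. f s = (\<Sum>n. cscale (of_nat n powr (- s)) (c n)))}"

definition dirichlet_alg1 :: "(complex \<Rightarrow> 'a::comm_complex_banach_algebra_1) set" where
  "dirichlet_alg1 = dirichlet_alg (\<lambda>_. 1)"

end

theory Submission
  imports Defs
begin

(* Represent f and g by their coefficient sequences F and G, multiplied by Dirichlet convolution.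
   Dirichlet coefficients are unique, so f g = 1 gives F G = 1. Truncating G to a Dirichlet
   polynomial P makes R = 1 - F P = F (G - P) small in the unweighted norm. The key estimate is
   that the weighted norms of the powers R^j grow no faster than r^j for any r larger than the
   unweighted norm of R: write R as finitely many monomials c m^-s plus a tail of small weighted
   norm. The powers c^k (m^k)^-s have weighted norm |c|^k w(m^k), and admissibility makes
   w(m^k) subexponential; a binomial expansion handles the sum. The Neumann series
   S = sum of the R^j therefore converges in the weighted algebra, F P S = 1, and G = P S. *)

section \<open>Formal Dirichlet series\<close>

typedef (overloaded) 'a fds = "{a :: nat \<Rightarrow> 'a::zero. a 0 = 0}"
  morphisms fds_nth Abs_fds
  by (rule exI[of _ "\<lambda>_. 0"]) simp

setup_lifting type_definition_fds

lemma fds_nth_0 [simp]: "fds_nth a 0 = 0"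
  using fds_nth[of a] by simp

lemma fds_nth_Abs_fds [simp]: "c 0 = 0 \<Longrightarrow> fds_nth (Abs_fds c) = c"
  by (simp add: Abs_fds_inverse)

lemma fds_eqI: "(\<And>n. n > 0 \<Longrightarrow> fds_nth a n = fds_nth b n) \<Longrightarrow> a = b"
  by (metis fds_nth_0 fds_nth_inject ext gr0I)

definition divisor_pairs :: "nat \<Rightarrow> (nat \<times> nat) set" where
  "divisor_pairs n = {(d, e). d * e = n}"

lemma finite_divisor_pairs: "n > 0 \<Longrightarrow> finite (divisor_pairs n)"
proof -
  assume "n > 0"
  then have "divisor_pairs n \<subseteq> {..n} \<times> {..n}"
    by (auto simp: divisor_pairs_def intro: dvd_imp_le)
  then show ?thesis
    by (rule finite_subset) auto
qed

lemma infinite_divisor_pairs_0: "infinite (divisor_pairs 0)"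
proof -
  have "inj (\<lambda>e. (0::nat, e))"
    by (simp add: inj_on_def)
  moreover have "range (\<lambda>e. (0::nat, e)) \<subseteq> divisor_pairs 0"
    by (auto simp: divisor_pairs_def)
  ultimately show ?thesis
    by (metis finite_imageD finite_subset infinite_UNIV_nat)
qed

definition dirichlet_conv :: "(nat \<Rightarrow> 'a::{times,comm_monoid_add}) \<Rightarrow> (nat \<Rightarrow> 'a) \<Rightarrow> nat \<Rightarrow> 'a" where
  "dirichlet_conv a b n = (\<Sum>(d, e)\<in>divisor_pairs n. a d * b e)"

lemma dirichlet_conv_0 [simp]: "dirichlet_conv a b 0 = 0"
  by (simp add: dirichlet_conv_def infinite_divisor_pairs_0)

lemma dirichlet_conv_commute:
  "dirichlet_conv a b = dirichlet_conv b (a :: nat \<Rightarrow> 'a::{ab_semigroup_mult,comm_monoid_add})"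
proof
  fix n
  show "dirichlet_conv a b n = dirichlet_conv b a n"
    unfolding dirichlet_conv_def
    by (rule sum.reindex_bij_witness[of _ prod.swap prod.swap])
       (auto simp: divisor_pairs_def mult.commute)
qed

lemma dirichlet_conv_assoc:
  "dirichlet_conv (dirichlet_conv a b) c =
     dirichlet_conv a (dirichlet_conv b (c :: nat \<Rightarrow> 'a::semiring_0))"
proof
  fix n :: nat
  show "dirichlet_conv (dirichlet_conv a b) c n = dirichlet_conv a (dirichlet_conv b c) n"
  proof (cases "n = 0")
    case False
    define T where "T = {(d, e, f). d * e * f = n}"
    have fin: "finite (divisor_pairs n)" "\<And>y. y \<in> divisor_pairs n \<Longrightarrow> finite (divisor_pairs (fst y))"
      "\<And>y. y \<in> divisor_pairs n \<Longrightarrow> finite (divisor_pairs (snd y))"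
      using False by (auto intro!: finite_divisor_pairs) (auto simp: divisor_pairs_def)
    have "dirichlet_conv (dirichlet_conv a b) c n =
        (\<Sum>(y, z)\<in>Sigma (divisor_pairs n) (\<lambda>y. divisor_pairs (fst y)). a (fst z) * b (snd z) * c (snd y))"
      unfolding dirichlet_conv_def
      by (subst sum.Sigma[symmetric]) (use fin in \<open>auto simp: case_prod_beta sum_distrib_right\<close>)
    also have "\<dots> = (\<Sum>(d, e, f)\<in>T. a d * b e * c f)"
      by (rule sum.reindex_bij_witness[of _ "\<lambda>(d, e, f). ((d * e, f), (d, e))"
            "\<lambda>((_, f), (d, e)). (d, e, f)"])
         (auto simp: divisor_pairs_def T_def)
    also have "\<dots> = (\<Sum>(y, z)\<in>Sigma (divisor_pairs n) (\<lambda>y. divisor_pairs (snd y)).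
        a (fst y) * b (fst z) * c (snd z))"
      by (rule sum.reindex_bij_witness[of _ "\<lambda>((d, _), (e, f)). (d, e, f)"
            "\<lambda>(d, e, f). ((d, e * f), (e, f))"])
         (auto simp: divisor_pairs_def T_def mult.assoc)
    also have "\<dots> = dirichlet_conv a (dirichlet_conv b c) n"
      unfolding dirichlet_conv_def
      by (subst sum.Sigma[symmetric])
         (use fin in \<open>auto simp: case_prod_beta sum_distrib_left mult.assoc\<close>)
    finally show ?thesis .
  qed simp
qed

lemma dirichlet_conv_add_left:
  "dirichlet_conv (\<lambda>n. a n + b n) c n =
     dirichlet_conv a c n + dirichlet_conv b (c :: nat \<Rightarrow> 'a::semiring_0) n"
  by (simp add: dirichlet_conv_def distrib_right sum.distrib case_prod_beta)

lemma dirichlet_conv_unit_left: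
  assumes "n > 0"
  shows "dirichlet_conv (\<lambda>n. if n = 1 then 1 else 0) a n = (a n :: 'a::semiring_1)"
proof -
  have "dirichlet_conv (\<lambda>n. if n = 1 then 1 else 0) a n =
      (\<Sum>x\<in>divisor_pairs n. if x = (1, n) then a n else 0)"
    unfolding dirichlet_conv_def by (rule sum.cong) (auto simp: divisor_pairs_def split: if_splits)
  also have "\<dots> = a n"
    using finite_divisor_pairs[OF assms] by (simp add: divisor_pairs_def)
  finally show ?thesis .
qed

instantiation fds :: (comm_ring_1) comm_ring_1
begin

lift_definition zero_fds :: "'a fds" is "\<lambda>_. 0" by simp
lift_definition one_fds :: "'a fds" is "\<lambda>n. if n = 1 then 1 else 0" by simp
lift_definition plus_fds :: "'a fds \<Rightarrow> 'a fds \<Rightarrow> 'a fds" is "\<lambda>a b n. a n + b n" by simp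
lift_definition minus_fds :: "'a fds \<Rightarrow> 'a fds \<Rightarrow> 'a fds" is "\<lambda>a b n. a n - b n" by simp
lift_definition uminus_fds :: "'a fds \<Rightarrow> 'a fds" is "\<lambda>a n. - a n" by simp
lift_definition times_fds :: "'a fds \<Rightarrow> 'a fds \<Rightarrow> 'a fds" is dirichlet_conv by simp

instance
proof
  fix a b c :: "'a fds"
  show "a * b * c = a * (b * c)" by transfer (rule dirichlet_conv_assoc)
  show "a * b = b * a" by transfer (rule dirichlet_conv_commute)
  show "1 * a = a" by (rule fds_eqI, transfer) (metis dirichlet_conv_unit_left One_nat_def)
  show "(a + b) * c = a * c + b * c" by transfer (simp add: dirichlet_conv_add_left fun_eq_iff)
  show "a + b + c = a + (b + c)" by transfer (simp add: add.assoc)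
  show "a + b = b + a" by transfer (simp add: add.commute)
  show "0 + a = a" by transfer simp
  show "- a + a = 0" by transfer simp
  show "a - b = a + - b" by transfer simp
  show "(0::'a fds) \<noteq> 1" by transfer (metis zero_neq_one)
qed

end

lemma fds_nth_zero [simp]: "fds_nth 0 n = 0"
  by transfer simp

lemma fds_nth_one: "fds_nth 1 n = (if n = 1 then 1 else 0)"
  by transfer simp

lemma fds_nth_add [simp]: "fds_nth (a + b) n = fds_nth a n + fds_nth b n"
  by transfer simp

lemma fds_nth_diff [simp]: "fds_nth (a - b) n = fds_nth a n - fds_nth b n"
  by transfer simp

lemma fds_nth_uminus [simp]: "fds_nth (- a) n = - fds_nth a n"
  by transfer simp

lemma fds_nth_mult: "fds_nth (a * b) n = dirichlet_conv (fds_nth a) (fds_nth b) n"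
  by transfer simp

lemma fds_nth_sum: "fds_nth (sum f A) n = (\<Sum>i\<in>A. fds_nth (f i) n)"
  by (induction A rule: infinite_finite_induct) simp_all

lemma has_sum_mult_of_summable_norm:
  fixes x y :: "nat \<Rightarrow> 'a::{real_normed_algebra,banach}"
  assumes x: "summable (\<lambda>n. norm (x n))" and y: "summable (\<lambda>n. norm (y n))"
  shows "((\<lambda>(d, e). x d * y e) has_sum (suminf x * suminf y)) (UNIV \<times> UNIV)"
proof -
  have has_sum_suminf: "(u has_sum suminf u) UNIV"
    if "summable (\<lambda>n. norm (u n))" for u :: "nat \<Rightarrow> 'b::banach"
    using that norm_summable_imp_has_sum summable_norm_cancel summable_sums by blast
  have "(\<lambda>(d, e). norm (x d) * norm (y e)) summable_on UNIV \<times> UNIV"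
  proof (rule summable_on_SigmaI[where g = "\<lambda>d. norm (x d) * (\<Sum>n. norm (y n))"])
    fix d :: nat
    have "((\<lambda>e. norm (x d) * norm (y e)) has_sum norm (x d) * (\<Sum>n. norm (y n))) UNIV"
      by (rule has_sum_cmult_right, rule has_sum_suminf) (use y in simp)
    then show "((\<lambda>e. case (d, e) of (d, e) \<Rightarrow> norm (x d) * norm (y e))
        has_sum norm (x d) * (\<Sum>n. norm (y n))) UNIV"
      by simp
    show "(\<lambda>d. norm (x d) * (\<Sum>n. norm (y n))) summable_on UNIV"
      by (rule summable_on_cmult_left, rule has_sum_imp_summable, rule has_sum_suminf) (use x in simp)
  qed auto
  then have "(\<lambda>(d, e). x d * y e) abs_summable_on UNIV \<times> UNIV"
    by (rule summable_on_comparison_test) (auto simp: norm_mult_ineq)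
  then have "(\<lambda>(d, e). x d * y e) summable_on UNIV \<times> UNIV"
    by (rule abs_summable_summable)
  then show ?thesis
    by (intro has_sum_SigmaI[where g = "\<lambda>d. x d * suminf y"])
       (auto intro: has_sum_cmult_right has_sum_cmult_left has_sum_suminf x y)
qed

lemma has_sum_divisor_pairs:
  fixes f :: "nat \<times> nat \<Rightarrow> 'a::banach"
  assumes "(f has_sum S) UNIV" and "\<And>e. f (0, e) = 0" and "\<And>d. f (d, 0) = 0"
  shows "((\<lambda>n. \<Sum>z\<in>divisor_pairs n. f z) has_sum S) UNIV"
proof -
  have "bij_betw snd (Sigma UNIV divisor_pairs) UNIV"
    by (rule bij_betw_byWitness[of _ "\<lambda>(d, e). (d * e, (d, e))"]) (auto simp: divisor_pairs_def)
  then have "((\<lambda>z. f (snd z)) has_sum S) (Sigma UNIV divisor_pairs)"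
    using has_sum_reindex_bij_betw assms(1) by blast
  then show ?thesis
  proof (rule has_sum_SigmaD)
    fix n :: nat
    show "((\<lambda>z. f (snd (n, z))) has_sum (\<Sum>z\<in>divisor_pairs n. f z)) (divisor_pairs n)"
    proof (cases "n = 0")
      case True
      have "(f has_sum 0) (divisor_pairs 0)"
        by (rule has_sum_0) (auto simp: divisor_pairs_def assms(2,3))
      then show ?thesis
        using True infinite_divisor_pairs_0 by simp
    qed (simp add: finite_divisor_pairs)
  qed
qed

lemma dirichlet_conv_sums:
  fixes x y :: "nat \<Rightarrow> 'a::{real_normed_algebra,banach}"
  assumes "summable (\<lambda>n. norm (x n))" "summable (\<lambda>n. norm (y n))" "x 0 = 0" "y 0 = 0"
  shows "dirichlet_conv x y sums (suminf x * suminf y)"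
  unfolding dirichlet_conv_def
  by (rule has_sum_imp_sums, rule has_sum_divisor_pairs)
     (use has_sum_mult_of_summable_norm[OF assms(1,2)] assms(3,4) in auto)

section \<open>Weighted norms\<close>

lemma summable_suminf_le_comparison:
  fixes f g :: "nat \<Rightarrow> real"
  assumes "\<And>n. 0 \<le> f n" "\<And>n. f n \<le> g n" "summable g"
  shows "summable f" "suminf f \<le> suminf g"
proof -
  show "summable f"
    by (rule summable_comparison_test'[OF assms(3), of 0]) (use assms(1,2) in auto)
  then show "suminf f \<le> suminf g"
    using assms(2,3) by (intro suminf_le)
qed

lemma weight_ge_1: "is_weight w \<Longrightarrow> 0 < n \<Longrightarrow> 1 \<le> w n"
  by (simp add: is_weight_def)

lemma weight_mult_le: "is_weight w \<Longrightarrow> 0 < m \<Longrightarrow> 0 < n \<Longrightarrow> w (m * n) \<le> w m * w n"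
  by (simp add: is_weight_def)

lemma is_weight_1: "is_weight (\<lambda>_. 1)"
  by (simp add: is_weight_def)

definition fds_wsummable :: "(nat \<Rightarrow> real) \<Rightarrow> 'a::real_normed_vector fds \<Rightarrow> bool" where
  "fds_wsummable w a \<longleftrightarrow> summable (\<lambda>n. norm (fds_nth a n) * w n)"

definition fds_wnorm :: "(nat \<Rightarrow> real) \<Rightarrow> 'a::real_normed_vector fds \<Rightarrow> real" where
  "fds_wnorm w a = (\<Sum>n. norm (fds_nth a n) * w n)"

lemma fds_wterm_nonneg: "is_weight w \<Longrightarrow> 0 \<le> norm (fds_nth a n) * w n"
  by (cases "n = 0") (auto dest: weight_ge_1[of w n])

lemma fds_wnorm_nonneg: "is_weight w \<Longrightarrow> fds_wsummable w a \<Longrightarrow> 0 \<le> fds_wnorm w a"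
  unfolding fds_wnorm_def fds_wsummable_def by (simp add: suminf_nonneg fds_wterm_nonneg)

lemma norm_fds_nth_le_fds_wnorm:
  assumes "is_weight w" "fds_wsummable w a"
  shows "norm (fds_nth a n) \<le> fds_wnorm w a"
proof (cases "n = 0")
  case False
  then have "norm (fds_nth a n) \<le> norm (fds_nth a n) * w n"
    using weight_ge_1[OF assms(1)] by (simp add: mult_le_cancel_left1)
  also have "\<dots> \<le> fds_wnorm w a"
    using assms unfolding fds_wnorm_def fds_wsummable_def
    by (intro sum_le_suminf[of _ "{n}", simplified]) (auto simp: fds_wterm_nonneg)
  finally show ?thesis .
qed (use fds_wnorm_nonneg[OF assms] in simp)

lemma
  assumes "is_weight w" "\<And>n. norm (fds_nth a n) * w n \<le> g n" "summable g"
  shows fds_wsummable_comparison: "fds_wsummable w a"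
    and fds_wnorm_le_comparison: "fds_wnorm w a \<le> suminf g"
  using summable_suminf_le_comparison[OF fds_wterm_nonneg[OF assms(1)] assms(2,3)]
  by (simp_all add: fds_wsummable_def fds_wnorm_def)

lemma fds_wsummable_unweighted:
  assumes "is_weight w" "fds_wsummable w a"
  shows "fds_wsummable (\<lambda>_. 1) a"
  unfolding fds_wsummable_def
proof (rule summable_suminf_le_comparison)
  show "norm (fds_nth a n) * 1 \<le> norm (fds_nth a n) * w n" for n
    using weight_ge_1[OF assms(1), of n] by (cases "n = 0") (simp_all add: mult_le_cancel_left1)
qed (use assms in \<open>simp_all add: fds_wsummable_def\<close>)

lemma fds_wsummable_uminus [simp]: "fds_wsummable w (- a) = fds_wsummable w a"
  by (simp add: fds_wsummable_def)

lemma
  assumes "is_weight w" "fds_wsummable w a" "fds_wsummable w b"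
  shows fds_wsummable_add: "fds_wsummable w (a + b)"
    and fds_wnorm_add_le: "fds_wnorm w (a + b) \<le> fds_wnorm w a + fds_wnorm w b"
proof -
  have le: "norm (fds_nth (a + b) n) * w n \<le> norm (fds_nth a n) * w n + norm (fds_nth b n) * w n" for n
    using weight_ge_1[OF assms(1), of n]
    by (cases "n = 0") (auto simp: distrib_right[symmetric] intro: mult_right_mono norm_triangle_ineq)
  have sum: "summable (\<lambda>n. norm (fds_nth a n) * w n + norm (fds_nth b n) * w n)"
    using assms(2,3) unfolding fds_wsummable_def by (rule summable_add)
  show "fds_wsummable w (a + b)"
    by (rule fds_wsummable_comparison[OF assms(1) le sum])
  show "fds_wnorm w (a + b) \<le> fds_wnorm w a + fds_wnorm w b"
    using fds_wnorm_le_comparison[OF assms(1) le sum] assms(2,3)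
    by (simp add: suminf_add fds_wnorm_def fds_wsummable_def)
qed

lemma fds_wsummable_diff:
  "is_weight w \<Longrightarrow> fds_wsummable w a \<Longrightarrow> fds_wsummable w b \<Longrightarrow> fds_wsummable w (a - b)"
  using fds_wsummable_add[of w a "- b"] by simp

lemma fds_wsummable_sum:
  "finite A \<Longrightarrow> is_weight w \<Longrightarrow> (\<And>i. i \<in> A \<Longrightarrow> fds_wsummable w (f i)) \<Longrightarrow>
    fds_wsummable w (\<Sum>i\<in>A. f i)"
proof (induction A rule: finite_induct)
  case empty
  then show ?case by (simp add: fds_wsummable_def)
qed (simp add: fds_wsummable_add)

lemma fds_wnorm_sum_le:
  "finite A \<Longrightarrow> is_weight w \<Longrightarrow> (\<And>i. i \<in> A \<Longrightarrow> fds_wsummable w (f i)) \<Longrightarrow>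
    fds_wnorm w (\<Sum>i\<in>A. f i) \<le> (\<Sum>i\<in>A. fds_wnorm w (f i))"
proof (induction A rule: finite_induct)
  case (insert i A)
  then show ?case
    using fds_wnorm_add_le[of w "f i" "sum f A"] by (simp add: fds_wsummable_sum)
qed (simp add: fds_wnorm_def)

lemma fds_wnorm_1_sums:
  "(\<lambda>n. norm (fds_nth (1 :: 'a::{real_normed_algebra_1,comm_ring_1} fds) n) * w n) sums w 1"
proof -
  have "(\<lambda>n. norm (fds_nth (1 :: 'a fds) n) * w n) = (\<lambda>n. if n = 1 then w 1 else 0)"
    by (auto simp: fds_nth_one)
  then show ?thesis
    using sums_single[of 1 "\<lambda>_. w 1"] by simp
qed

lemma fds_wsummable_1: "fds_wsummable w (1 :: 'a::{real_normed_algebra_1,comm_ring_1} fds)"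
  unfolding fds_wsummable_def using fds_wnorm_1_sums by (rule sums_summable)

lemma fds_wnorm_1: "is_weight w \<Longrightarrow> fds_wnorm w (1 :: 'a::{real_normed_algebra_1,comm_ring_1} fds) = 1"
  unfolding fds_wnorm_def using fds_wnorm_1_sums sums_unique by (metis is_weight_def)

lemma
  fixes a b :: "'a::{real_normed_algebra_1,comm_ring_1} fds"
  assumes w: "is_weight w" and a: "fds_wsummable w a" and b: "fds_wsummable w b"
  shows fds_wsummable_mult: "fds_wsummable w (a * b)"
    and fds_wnorm_mult_le: "fds_wnorm w (a * b) \<le> fds_wnorm w a * fds_wnorm w b"
proof -
  define x where "x n = norm (fds_nth a n) * w n" for n
  define y where "y n = norm (fds_nth b n) * w n" for n
  have "dirichlet_conv x y sums (suminf x * suminf y)"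
    using a b
    by (intro dirichlet_conv_sums)
       (simp_all add: x_def y_def fds_wsummable_def abs_of_nonneg fds_wterm_nonneg[OF w])
  then have sums: "dirichlet_conv x y sums (fds_wnorm w a * fds_wnorm w b)"
    by (simp add: x_def[abs_def] y_def[abs_def] fds_wnorm_def)
  have le: "norm (fds_nth (a * b) n) * w n \<le> dirichlet_conv x y n" for n
  proof (cases "n = 0")
    case False
    have "norm (fds_nth (a * b) n) * w n
        \<le> (\<Sum>(d, e)\<in>divisor_pairs n. norm (fds_nth a d) * norm (fds_nth b e)) * w n"
      unfolding fds_nth_mult dirichlet_conv_def using weight_ge_1[OF w, of n] False
      by (intro mult_right_mono order.trans[OF norm_sum sum_mono])
         (auto simp: case_prod_beta norm_mult_ineq)
    also have "\<dots> = (\<Sum>(d, e)\<in>divisor_pairs n. norm (fds_nth a d) * norm (fds_nth b e) * w (d * e))"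
      unfolding sum_distrib_right by (rule sum.cong) (auto simp: divisor_pairs_def)
    also have "\<dots> \<le> (\<Sum>(d, e)\<in>divisor_pairs n. norm (fds_nth a d) * norm (fds_nth b e) * (w d * w e))"
      using False
      by (intro sum_mono) (auto simp: divisor_pairs_def intro!: mult_left_mono weight_mult_le[OF w])
    also have "\<dots> = dirichlet_conv x y n"
      by (simp add: dirichlet_conv_def x_def y_def case_prod_beta mult_ac)
    finally show ?thesis .
  qed simp
  show "fds_wsummable w (a * b)"
    by (rule fds_wsummable_comparison[OF w le sums_summable[OF sums]])
  show "fds_wnorm w (a * b) \<le> fds_wnorm w a * fds_wnorm w b"
    using fds_wnorm_le_comparison[OF w le sums_summable[OF sums]] sums_unique[OF sums] by simp
qed

lemma fds_wsummable_power:
  fixes a :: "'a::{real_normed_algebra_1,comm_ring_1} fds"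
  shows "is_weight w \<Longrightarrow> fds_wsummable w a \<Longrightarrow> fds_wsummable w (a ^ j)"
  by (induction j) (simp_all add: fds_wsummable_1 fds_wsummable_mult)

lemma fds_wnorm_power_le:
  fixes a :: "'a::{real_normed_algebra_1,comm_ring_1} fds"
  assumes w: "is_weight w" and a: "fds_wsummable w a"
  shows "fds_wnorm w (a ^ j) \<le> fds_wnorm w a ^ j"
proof (induction j)
  case 0
  show ?case by (simp add: fds_wnorm_1 w)
next
  case (Suc j)
  have "fds_wnorm w (a ^ Suc j) \<le> fds_wnorm w a * fds_wnorm w (a ^ j)"
    by (simp add: fds_wnorm_mult_le fds_wsummable_power w a)
  also have "\<dots> \<le> fds_wnorm w a * fds_wnorm w a ^ j"
    using Suc by (intro mult_left_mono fds_wnorm_nonneg w a)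
  finally show ?case by simp
qed

lemma
  fixes a :: "'a::{real_normed_algebra_1,comm_ring_1} fds"
  assumes "is_weight w" "fds_wsummable w a"
  shows fds_wsummable_of_nat_mult: "fds_wsummable w (of_nat m * a)"
    and fds_wnorm_of_nat_mult_le: "fds_wnorm w (of_nat m * a) \<le> of_nat m * fds_wnorm w a"
proof -
  have "of_nat m * a = (\<Sum>i<m. a)"
    by simp
  then show "fds_wsummable w (of_nat m * a)" "fds_wnorm w (of_nat m * a) \<le> of_nat m * fds_wnorm w a"
    using fds_wsummable_sum[of "{..<m}" w "\<lambda>_. a"] fds_wnorm_sum_le[of "{..<m}" w "\<lambda>_. a"] assms
    by simp_all
qed

definition fds_monom :: "'a::zero \<Rightarrow> nat \<Rightarrow> 'a fds" where
  "fds_monom c m = Abs_fds (\<lambda>n. if n = m \<and> m \<noteq> 0 then c else 0)"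

lemma fds_nth_monom: "fds_nth (fds_monom c m) n = (if n = m \<and> m \<noteq> 0 then c else 0)"
  unfolding fds_monom_def by (subst fds_nth_Abs_fds) auto

lemma fds_monom_0 [simp]: "fds_monom c 0 = 0"
  by (rule fds_eqI) (simp add: fds_nth_monom)

lemma fds_monom_mult:
  assumes "0 < m" "0 < k"
  shows "fds_monom c m * fds_monom d k = fds_monom (c * d) (m * k :: nat)"
proof (rule fds_eqI)
  fix n :: nat
  assume "0 < n"
  have "fds_nth (fds_monom c m * fds_monom d k) n =
      (\<Sum>z\<in>divisor_pairs n. if z = (m, k) then c * d else 0)"
    unfolding fds_nth_mult dirichlet_conv_def using assms
    by (intro sum.cong) (auto simp: fds_nth_monom split: if_splits)
  also have "\<dots> = fds_nth (fds_monom (c * d) (m * k)) n"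
    using finite_divisor_pairs[OF \<open>0 < n\<close>] assms by (auto simp: fds_nth_monom divisor_pairs_def)
  finally show "fds_nth (fds_monom c m * fds_monom d k) n = fds_nth (fds_monom (c * d) (m * k)) n" .
qed

lemma fds_monom_power: "0 < m \<Longrightarrow> fds_monom c m ^ j = fds_monom (c ^ j) (m ^ j)"
proof (induction j)
  case 0
  show ?case by (rule fds_eqI) (simp add: fds_nth_monom fds_nth_one)
qed (simp add: fds_monom_mult)

lemma fds_wnorm_monom_sums:
  "0 < m \<Longrightarrow> (\<lambda>n. norm (fds_nth (fds_monom c m) n) * w n) sums (norm c * w m)"
  using sums_single[of m "\<lambda>_. norm c * w m"]
  by (simp add: fds_nth_monom if_distrib if_distribR cong: if_cong)

lemma fds_wsummable_monom: "fds_wsummable w (fds_monom c m)"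
  using fds_wnorm_monom_sums[of m c w]
  by (cases "m = 0") (auto simp: fds_wsummable_def fds_nth_monom sums_summable)

lemma fds_wnorm_monom: "0 < m \<Longrightarrow> fds_wnorm w (fds_monom c m) = norm c * w m"
  unfolding fds_wnorm_def using fds_wnorm_monom_sums by (rule sums_unique[symmetric])

definition fds_trunc :: "nat \<Rightarrow> 'a::zero fds \<Rightarrow> 'a fds" where
  "fds_trunc N a = Abs_fds (\<lambda>n. if n < N then fds_nth a n else 0)"

lemma fds_nth_trunc: "fds_nth (fds_trunc N a) n = (if n < N then fds_nth a n else 0)"
  by (simp add: fds_trunc_def)

lemma fds_trunc_eq_sum_monom: "fds_trunc N a = (\<Sum>m<N. fds_monom (fds_nth a m) m)"
proof (rule fds_eqI)
  fix n :: nat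
  assume "0 < n"
  then have "(\<Sum>m<N. fds_nth (fds_monom (fds_nth a m) m) n) = (\<Sum>m<N. if m = n then fds_nth a n else 0)"
    by (intro sum.cong) (auto simp: fds_nth_monom)
  then show "fds_nth (fds_trunc N a) n = fds_nth (\<Sum>m<N. fds_monom (fds_nth a m) m) n"
    by (simp add: fds_nth_trunc fds_nth_sum)
qed

lemma fds_wsummable_trunc: "fds_wsummable w (fds_trunc N (a :: 'a::real_normed_vector fds))"
  unfolding fds_wsummable_def fds_nth_trunc
  by (rule summable_finite[of "{..<N}"]) auto

lemma fds_wnorm_tail_less:
  assumes "is_weight w" "fds_wsummable w (a :: 'a::{real_normed_algebra_1,comm_ring_1} fds)" "0 < \<epsilon>"
  obtains N where "fds_wnorm w (a - fds_trunc N a) < \<epsilon>"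
proof -
  define f where "f n = norm (fds_nth a n) * w n" for n
  have "summable f"
    using assms(2) by (simp add: fds_wsummable_def f_def[abs_def])
  then obtain N where N: "norm (\<Sum>i. f (i + N)) < \<epsilon>"
    using suminf_exist_split[OF assms(3)] by blast
  have "(\<lambda>n. norm (fds_nth (a - fds_trunc N a) n) * w n) = (\<lambda>n. if n < N then 0 else f n)"
    by (auto simp: fds_nth_trunc f_def)
  then have "fds_wnorm w (a - fds_trunc N a) = (\<Sum>i. f (i + N))"
    using suminf_split_initial_segment[of "\<lambda>n. if n < N then 0 else f n" N]
      summable_iff_shift[of "\<lambda>n. if n < N then 0 else f n" N] \<open>summable f\<close>
    by (simp add: fds_wnorm_def)
  with N show ?thesis
    by (intro that[of N]) simp
qed

section \<open>Growth of powers\<close>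

(* fds_power_bounded w a r bounds the spectral radius of a in the weighted algebra by r. *)
definition fds_power_bounded ::
  "(nat \<Rightarrow> real) \<Rightarrow> 'a::{real_normed_algebra_1,comm_ring_1} fds \<Rightarrow> real \<Rightarrow> bool" where
  "fds_power_bounded w a r \<longleftrightarrow> (\<exists>C. \<forall>j. fds_wnorm w (a ^ j) \<le> C * r ^ j)"

lemma fds_power_boundedE:
  assumes "is_weight w" "fds_power_bounded w a r"
  obtains C where "0 \<le> C" "\<And>j. fds_wnorm w (a ^ j) \<le> C * r ^ j"
proof -
  obtain C where C: "\<And>j. fds_wnorm w (a ^ j) \<le> C * r ^ j"
    using assms(2) by (auto simp: fds_power_bounded_def)
  moreover have "0 \<le> C"
    using C[of 0] by (simp add: fds_wnorm_1 assms(1))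
  ultimately show ?thesis
    using that by blast
qed

lemma fds_power_bounded_mono:
  assumes "is_weight w" "fds_power_bounded w a r" "0 \<le> r" "r \<le> s"
  shows "fds_power_bounded w a s"
proof -
  obtain C where "0 \<le> C" "\<And>j. fds_wnorm w (a ^ j) \<le> C * r ^ j"
    using fds_power_boundedE[OF assms(1,2)] by blast
  then have "fds_wnorm w (a ^ j) \<le> C * s ^ j" for j
    using assms(3,4) by (meson mult_left_mono order.trans power_mono)
  then show ?thesis
    by (auto simp: fds_power_bounded_def)
qed

lemma fds_power_bounded_wnorm:
  "is_weight w \<Longrightarrow> fds_wsummable w a \<Longrightarrow> fds_power_bounded w a (fds_wnorm w a)"
  unfolding fds_power_bounded_def using fds_wnorm_power_le by (metis mult_1)

lemma fds_power_bounded_0: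
  assumes "is_weight w" "0 \<le> r"
  shows "fds_power_bounded w (0 :: 'a::{real_normed_algebra_1,comm_ring_1} fds) r"
  unfolding fds_power_bounded_def
  by (rule exI[of _ 1]) (use assms in \<open>auto simp: power_0_left fds_wnorm_1 fds_wnorm_def[of _ 0]\<close>)

lemma fds_power_bounded_add:
  fixes a b :: "'a::{real_normed_algebra_1,comm_ring_1} fds"
  assumes w: "is_weight w" and a: "fds_wsummable w a" and b: "fds_wsummable w b"
    and r: "0 \<le> r" and s: "0 \<le> s"
    and "fds_power_bounded w a r" "fds_power_bounded w b s"
  shows "fds_power_bounded w (a + b) (r + s)"
proof -
  obtain C where C: "0 \<le> C" "\<And>j. fds_wnorm w (a ^ j) \<le> C * r ^ j"
    using fds_power_boundedE[OF w assms(6)] by blast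
  obtain D where D: "0 \<le> D" "\<And>j. fds_wnorm w (b ^ j) \<le> D * s ^ j"
    using fds_power_boundedE[OF w assms(7)] by blast
  define t where "t n k = of_nat (n choose k) * a ^ k * b ^ (n - k)" for n k
  have t: "fds_wsummable w (t n k)" for n k
    unfolding t_def
    by (intro fds_wsummable_mult fds_wsummable_of_nat_mult fds_wsummable_power w a b)
  have t_le: "fds_wnorm w (t n k) \<le> of_nat (n choose k) * (C * r ^ k) * (D * s ^ (n - k))" for n k
  proof -
    have "fds_wnorm w (t n k) \<le> fds_wnorm w (of_nat (n choose k) * a ^ k) * fds_wnorm w (b ^ (n - k))"
      unfolding t_def
      by (intro fds_wnorm_mult_le fds_wsummable_of_nat_mult fds_wsummable_power w a b)
    also have "\<dots> \<le> (of_nat (n choose k) * fds_wnorm w (a ^ k)) * fds_wnorm w (b ^ (n - k))"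
      by (intro mult_right_mono fds_wnorm_of_nat_mult_le fds_wnorm_nonneg fds_wsummable_power w a b)
    also have "\<dots> \<le> of_nat (n choose k) * (C * r ^ k) * (D * s ^ (n - k))"
      using C D r s
      by (intro mult_mono mult_left_mono fds_wnorm_nonneg fds_wsummable_power w a b) auto
    finally show ?thesis .
  qed
  have "fds_wnorm w ((a + b) ^ n) \<le> C * D * (r + s) ^ n" for n
  proof -
    have "fds_wnorm w ((a + b) ^ n) = fds_wnorm w (\<Sum>k\<le>n. t n k)"
      by (simp add: binomial_ring t_def)
    also have "\<dots> \<le> (\<Sum>k\<le>n. fds_wnorm w (t n k))"
      by (rule fds_wnorm_sum_le) (use w t in auto)
    also have "\<dots> \<le> (\<Sum>k\<le>n. of_nat (n choose k) * (C * r ^ k) * (D * s ^ (n - k)))"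
      by (rule sum_mono) (rule t_le)
    also have "\<dots> = C * D * (r + s) ^ n"
      by (simp add: binomial_ring sum_distrib_left mult_ac)
    finally show ?thesis .
  qed
  then show ?thesis
    by (auto simp: fds_power_bounded_def)
qed

lemma fds_power_bounded_sum:
  fixes f :: "'i \<Rightarrow> 'a::{real_normed_algebra_1,comm_ring_1} fds"
  assumes "finite A" "is_weight w"
    and "\<And>i. i \<in> A \<Longrightarrow> fds_wsummable w (f i) \<and> 0 \<le> r i \<and> fds_power_bounded w (f i) (r i)"
  shows "fds_power_bounded w (\<Sum>i\<in>A. f i) (\<Sum>i\<in>A. r i)"
  using assms
proof (induction A rule: finite_induct)
  case empty
  then show ?case by (simp add: fds_power_bounded_0)
next
  case (insert i A)
  then show ?case
    by (simp add: fds_power_bounded_add fds_wsummable_sum sum_nonneg)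
qed

lemma admissible_weight_subexponential:
  assumes "admissible_weight w" "0 < m" "1 < \<rho>"
  obtains C where "\<And>k. w (m ^ k) \<le> C * \<rho> ^ k"
proof -
  have w_ge_1: "1 \<le> w (m ^ k)" for k
    using assms(1,2) by (simp add: admissible_weight_def weight_ge_1)
  have "(\<lambda>k. w (m ^ k) powr (1 / real k)) \<longlonglongrightarrow> 1"
    using assms(1,2) by (simp add: admissible_weight_def)
  then have "eventually (\<lambda>k. w (m ^ k) powr (1 / real k) < \<rho>) sequentially"
    using assms(3) by (rule order_tendstoD)
  then obtain K where K: "\<And>k. K \<le> k \<Longrightarrow> w (m ^ k) powr (1 / real k) < \<rho>"
    by (auto simp: eventually_sequentially)
  define C where "C = (\<Sum>k\<le>K. w (m ^ k))"
  have le_C: "w (m ^ k) \<le> C" if "k \<le> K" for k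
    unfolding C_def using that w_ge_1 by (intro member_le_sum) (auto intro: order.trans[OF zero_le_one])
  then have C_le: "C \<le> C * \<rho> ^ k" "\<rho> ^ k \<le> C * \<rho> ^ k" for k
    using le_C[of 0] w_ge_1[of 0] assms(3)
      mult_left_mono[OF one_le_power[of \<rho> k], of C] mult_right_mono[of 1 C "\<rho> ^ k"]
    by simp_all
  have "w (m ^ k) \<le> C * \<rho> ^ k" for k
  proof (cases "k \<le> K")
    case True
    then show ?thesis
      using le_C C_le(1) order.trans by blast
  next
    case False
    then have k: "K \<le> k" "0 < k" by auto
    have "w (m ^ k) = (w (m ^ k) powr (1 / real k)) ^ k"
      using w_ge_1[of k] k(2) by (simp add: powr_realpow[symmetric] powr_powr)
    also have "\<dots> \<le> \<rho> ^ k"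
      using K[OF k(1)] by (intro power_mono) auto
    also have "\<dots> \<le> C * \<rho> ^ k"
      by (rule C_le(2))
    finally show ?thesis .
  qed
  then show ?thesis
    using that by blast
qed

lemma fds_power_bounded_monom:
  assumes "admissible_weight w" "1 < \<rho>"
  shows "fds_power_bounded w (fds_monom (c :: 'a::{real_normed_algebra_1,comm_ring_1}) m) (\<rho> * norm c)"
proof (cases "m = 0")
  case True
  then show ?thesis
    using assms by (simp add: fds_power_bounded_0 admissible_weight_def)
next
  case False
  obtain C where C: "\<And>k. w (m ^ k) \<le> C * \<rho> ^ k"
    using admissible_weight_subexponential[OF assms(1) _ assms(2)] False by blast
  have "fds_wnorm w (fds_monom c m ^ k) \<le> C * (\<rho> * norm c) ^ k" for k
  proof -
    have "fds_wnorm w (fds_monom c m ^ k) = norm (c ^ k) * w (m ^ k)"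
      using False by (simp add: fds_monom_power fds_wnorm_monom)
    also have "\<dots> \<le> norm c ^ k * (C * \<rho> ^ k)"
      using assms(1) False weight_ge_1[of w "m ^ k"]
      by (intro mult_mono norm_power_ineq C) (auto simp: admissible_weight_def)
    also have "\<dots> = C * (\<rho> * norm c) ^ k"
      by (simp add: power_mult_distrib)
    finally show ?thesis .
  qed
  then show ?thesis
    by (auto simp: fds_power_bounded_def)
qed

lemma fds_power_bounded_trunc:
  assumes "admissible_weight w" "1 < \<rho>"
  shows "fds_power_bounded w (fds_trunc N (a :: 'a::{real_normed_algebra_1,comm_ring_1} fds))
           (\<rho> * (\<Sum>m<N. norm (fds_nth a m)))"
  unfolding fds_trunc_eq_sum_monom sum_distrib_left
  using assms
  by (intro fds_power_bounded_sum fds_power_bounded_monom conjI fds_wsummable_monom)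
     (auto simp: admissible_weight_def)

lemma fds_power_bounded_if_unweighted_less:
  fixes a :: "'a::{real_normed_algebra_1,comm_ring_1} fds"
  assumes adm: "admissible_weight w" and a: "fds_wsummable w a" and less: "fds_wnorm (\<lambda>_. 1) a < r"
  shows "fds_power_bounded w a r"
proof -
  have w: "is_weight w"
    using adm by (simp add: admissible_weight_def)
  define A where "A = fds_wnorm (\<lambda>_. 1) a"
  have "0 \<le> A"
    unfolding A_def by (intro fds_wnorm_nonneg is_weight_1 fds_wsummable_unweighted[OF w a])
  (* Split a into a Dirichlet polynomial, whose monomials have powers growing like (\<rho> |a_m|)^k,
     and a tail of small weighted norm. *)
  define \<rho> where "\<rho> = 2 * r / (r + A)"
  have \<rho>: "1 < \<rho>" "\<rho> * A < r"
    using \<open>0 \<le> A\<close> less by (auto simp: \<rho>_def A_def field_simps)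
  obtain N where N: "fds_wnorm w (a - fds_trunc N a) < r - \<rho> * A"
    using fds_wnorm_tail_less[OF w a, of "r - \<rho> * A"] \<rho>(2) by auto
  define q where "q = \<rho> * (\<Sum>m<N. norm (fds_nth a m)) + fds_wnorm w (a - fds_trunc N a)"
  have tail: "fds_wsummable w (a - fds_trunc N a)"
    by (intro fds_wsummable_diff w a fds_wsummable_trunc)
  have "fds_power_bounded w (fds_trunc N a + (a - fds_trunc N a)) q"
    unfolding q_def using \<rho>(1) tail
    by (intro fds_power_bounded_add fds_power_bounded_trunc fds_power_bounded_wnorm
        fds_wsummable_trunc fds_wnorm_nonneg w adm) (auto intro!: sum_nonneg mult_nonneg_nonneg)
  moreover have "(\<Sum>m<N. norm (fds_nth a m)) \<le> A"
    using fds_wsummable_unweighted[OF w a]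
    unfolding A_def fds_wnorm_def fds_wsummable_def by (simp add: sum_le_suminf)
  then have "q \<le> r"
    using N \<rho>(1) unfolding q_def by (smt (verit) mult_left_mono)
  moreover have "0 \<le> q"
    unfolding q_def using \<rho>(1) by (intro add_nonneg_nonneg mult_nonneg_nonneg sum_nonneg
        fds_wnorm_nonneg w tail) auto
  ultimately show ?thesis
    using fds_power_bounded_mono[OF w] by simp
qed

section \<open>Neumann series and inverse-closedness\<close>

definition fds_suminf :: "(nat \<Rightarrow> 'a::real_normed_vector fds) \<Rightarrow> 'a fds" where
  "fds_suminf b = Abs_fds (\<lambda>n. \<Sum>j. fds_nth (b j) n)"

lemma fds_nth_suminf: "fds_nth (fds_suminf b) n = (\<Sum>j. fds_nth (b j) n)"
  by (simp add: fds_suminf_def)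

lemma summable_norm_fds_nth:
  assumes "is_weight w" "\<And>j. fds_wsummable w (b j)" "summable (\<lambda>j. fds_wnorm w (b j))"
  shows "summable (\<lambda>j. norm (fds_nth (b j) n))"
  by (rule summable_comparison_test'[OF assms(3), of 0])
     (use norm_fds_nth_le_fds_wnorm[OF assms(1,2)] in auto)

lemma fds_wsummable_suminf:
  fixes b :: "nat \<Rightarrow> 'a::banach fds"
  assumes w: "is_weight w" and b: "\<And>j. fds_wsummable w (b j)"
    and sum: "summable (\<lambda>j. fds_wnorm w (b j))"
  shows "fds_wsummable w (fds_suminf b)"
  unfolding fds_wsummable_def
proof (rule bounded_imp_summable)
  show "0 \<le> norm (fds_nth (fds_suminf b) n) * w n" for n
    by (rule fds_wterm_nonneg[OF w])
  have norm_b: "summable (\<lambda>j. norm (fds_nth (b j) n))" for n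
    by (rule summable_norm_fds_nth[OF w b sum])
  fix M
  have "(\<Sum>n\<le>M. norm (fds_nth (fds_suminf b) n) * w n) \<le> (\<Sum>n\<le>M. \<Sum>j. norm (fds_nth (b j) n) * w n)"
  proof (rule sum_mono)
    fix n
    show "norm (fds_nth (fds_suminf b) n) * w n \<le> (\<Sum>j. norm (fds_nth (b j) n) * w n)"
    proof (cases "n = 0")
      case False
      then have "norm (fds_nth (fds_suminf b) n) * w n \<le> (\<Sum>j. norm (fds_nth (b j) n)) * w n"
        unfolding fds_nth_suminf using weight_ge_1[OF w, of n]
        by (intro mult_right_mono summable_norm norm_b) auto
      then show ?thesis
        by (simp add: suminf_mult2[OF norm_b])
    qed simp
  qed
  also have "\<dots> = (\<Sum>j. \<Sum>n\<le>M. norm (fds_nth (b j) n) * w n)"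
    by (rule suminf_sum[symmetric]) (rule summable_mult2[OF norm_b])
  also have "\<dots> \<le> (\<Sum>j. fds_wnorm w (b j))"
  proof (rule suminf_le)
    show le: "(\<Sum>n\<le>M. norm (fds_nth (b j) n) * w n) \<le> fds_wnorm w (b j)" for j
      using b[of j] unfolding fds_wnorm_def fds_wsummable_def
      by (intro sum_le_suminf) (auto simp: fds_wterm_nonneg[OF w])
    have "0 \<le> (\<Sum>n\<le>M. norm (fds_nth (b j) n) * w n)" for j
      by (intro sum_nonneg fds_wterm_nonneg[OF w])
    then show "summable (\<lambda>j. \<Sum>n\<le>M. norm (fds_nth (b j) n) * w n)"
      by (intro summable_comparison_test'[OF sum, of 0]) (use le in auto)
  qed (rule sum)
  finally show "(\<Sum>n\<le>M. norm (fds_nth (fds_suminf b) n) * w n) \<le> (\<Sum>j. fds_wnorm w (b j))" .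
qed

lemma fds_mult_suminf:
  fixes a :: "'a::{real_normed_algebra_1,comm_ring_1} fds"
  assumes "\<And>n. summable (\<lambda>j. fds_nth (b j) n)"
  shows "a * fds_suminf b = fds_suminf (\<lambda>j. a * b j)"
proof (rule fds_eqI)
  fix n :: nat
  assume "0 < n"
  have "fds_nth (a * fds_suminf b) n = (\<Sum>(d, e)\<in>divisor_pairs n. \<Sum>j. fds_nth a d * fds_nth (b j) e)"
    unfolding fds_nth_mult dirichlet_conv_def fds_nth_suminf
    by (simp add: case_prod_beta suminf_mult[OF assms])
  also have "\<dots> = (\<Sum>j. \<Sum>(d, e)\<in>divisor_pairs n. fds_nth a d * fds_nth (b j) e)"
    using assms by (subst suminf_sum) (auto simp: case_prod_beta intro: summable_mult)
  also have "\<dots> = fds_nth (fds_suminf (\<lambda>j. a * b j)) n"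
    by (simp add: fds_nth_suminf fds_nth_mult dirichlet_conv_def)
  finally show "fds_nth (a * fds_suminf b) n = fds_nth (fds_suminf (\<lambda>j. a * b j)) n" .
qed

lemma
  fixes R :: "'a::{real_normed_algebra_1,comm_ring_1,banach} fds"
  assumes w: "is_weight w" and R: "fds_wsummable w R"
    and sum: "summable (\<lambda>j. fds_wnorm w (R ^ j))"
  shows fds_wsummable_neumann_series: "fds_wsummable w (fds_suminf (\<lambda>j. R ^ j))"
    and fds_neumann_series_inverse: "(1 - R) * fds_suminf (\<lambda>j. R ^ j) = 1"
proof -
  have powers: "fds_wsummable w (R ^ j)" for j
    by (rule fds_wsummable_power[OF w R])
  show "fds_wsummable w (fds_suminf (\<lambda>j. R ^ j))"
    by (rule fds_wsummable_suminf[OF w powers sum])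
  have summable: "summable (\<lambda>j. fds_nth (R ^ j) n)" for n
    by (rule summable_norm_cancel, rule summable_norm_fds_nth[OF w powers sum])
  have "R * fds_suminf (\<lambda>j. R ^ j) = fds_suminf (\<lambda>j. R ^ Suc j)"
    by (simp add: fds_mult_suminf[OF summable])
  moreover have "fds_suminf (\<lambda>j. R ^ j) - fds_suminf (\<lambda>j. R ^ Suc j) = 1"
    by (rule fds_eqI)
       (simp add: fds_nth_suminf suminf_split_head[OF summable] fds_nth_one del: power_Suc)
  ultimately show "(1 - R) * fds_suminf (\<lambda>j. R ^ j) = 1"
    by (simp add: algebra_simps)
qed

lemma fds_wsummable_inverse_one_minus:
  fixes R :: "'a::{real_normed_algebra_1,comm_ring_1,banach} fds"
  assumes adm: "admissible_weight w" and R: "fds_wsummable w R" and "fds_wnorm (\<lambda>_. 1) R < 1"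
  obtains S where "fds_wsummable w S" "(1 - R) * S = 1"
proof -
  have w: "is_weight w"
    using adm by (simp add: admissible_weight_def)
  define q where "q = (1 + fds_wnorm (\<lambda>_. 1) R) / 2"
  have q: "fds_wnorm (\<lambda>_. 1) R < q" "q < 1"
    using assms(3) by (simp_all add: q_def)
  have "0 \<le> q"
    using q fds_wnorm_nonneg[OF is_weight_1 fds_wsummable_unweighted[OF w R]] by linarith
  obtain C where C: "\<And>j. fds_wnorm w (R ^ j) \<le> C * q ^ j"
    using fds_power_bounded_if_unweighted_less[OF adm R q(1)] by (auto simp: fds_power_bounded_def)
  have le: "norm (fds_wnorm w (R ^ j)) \<le> C * q ^ j" for j
    using C[of j] fds_wnorm_nonneg[OF w fds_wsummable_power[OF w R]] by simp
  have "summable (\<lambda>j. C * q ^ j)"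
    using \<open>0 \<le> q\<close> q(2) by (intro summable_mult summable_geometric) simp
  then have "summable (\<lambda>j. fds_wnorm w (R ^ j))"
    by (rule summable_comparison_test'[where N = 0]) (rule le)
  then show ?thesis
    using that fds_wsummable_neumann_series[OF w R] fds_neumann_series_inverse[OF w R] by blast
qed

theorem fds_wsummable_inverse:
  fixes F G :: "'a::{real_normed_algebra_1,comm_ring_1,banach} fds"
  assumes adm: "admissible_weight w" and F: "fds_wsummable w F"
    and G: "fds_wsummable (\<lambda>_. 1) G" and FG: "F * G = 1"
  shows "fds_wsummable w G"
proof -
  have w: "is_weight w"
    using adm by (simp add: admissible_weight_def)
  have F1: "fds_wsummable (\<lambda>_. 1) F"
    by (rule fds_wsummable_unweighted[OF w F])
  define K where "K = fds_wnorm (\<lambda>_. 1) F"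
  have "0 \<le> K"
    unfolding K_def by (rule fds_wnorm_nonneg[OF is_weight_1 F1])
  obtain N where N: "fds_wnorm (\<lambda>_. 1) (G - fds_trunc N G) < 1 / (K + 1)"
    using fds_wnorm_tail_less[OF is_weight_1 G, of "1 / (K + 1)"] \<open>0 \<le> K\<close> by auto
  define P where "P = fds_trunc N G"
  have P: "fds_wsummable w P"
    unfolding P_def by (rule fds_wsummable_trunc)
  have "1 - F * P = F * (G - P)"
    by (simp add: right_diff_distrib FG)
  then have "fds_wnorm (\<lambda>_. 1) (1 - F * P) \<le> K * fds_wnorm (\<lambda>_. 1) (G - P)"
    unfolding K_def P_def
    using fds_wnorm_mult_le[OF is_weight_1 F1 fds_wsummable_diff[OF is_weight_1 G fds_wsummable_trunc]]
    by simp
  also have "\<dots> \<le> K * (1 / (K + 1))"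
    using N \<open>0 \<le> K\<close> unfolding P_def by (intro mult_left_mono) auto
  also have "\<dots> < 1"
    using \<open>0 \<le> K\<close> by (simp add: field_simps)
  finally have small: "fds_wnorm (\<lambda>_. 1) (1 - F * P) < 1" .
  have "fds_wsummable w (1 - F * P)"
    by (intro fds_wsummable_diff fds_wsummable_1 fds_wsummable_mult w F P)
  then obtain S where S: "fds_wsummable w S" "(1 - (1 - F * P)) * S = 1"
    using fds_wsummable_inverse_one_minus[OF adm _ small] by blast
  have "F * (P * S) = 1"
    using S(2) by (simp add: mult.assoc)
  then have "G = (F * G) * (P * S)"
    by (metis mult.left_commute mult_1_right)
  also have "\<dots> = P * S"
    by (simp add: FG)
  finally show ?thesis
    using P S(1) w by (simp add: fds_wsummable_mult)
qed

section \<open>Evaluation on the half-plane\<close>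

lemma cscale_0_right [simp]: "cscale c (0 :: 'a::comm_complex_banach_algebra_1) = 0"
  using norm_cscale[of c "0 :: 'a"] by simp

lemma cscale_diff_right:
  "cscale c (x - y) = cscale c x - cscale c (y :: 'a::comm_complex_banach_algebra_1)"
  by (metis add_diff_cancel diff_add_cancel cscale_add_right)

lemma cscale_sum_right:
  "cscale c (\<Sum>i\<in>A. f i) = (\<Sum>i\<in>A. cscale c (f i :: 'a::comm_complex_banach_algebra_1))"
  by (induction A rule: infinite_finite_induct) (simp_all add: cscale_add_right)

lemma cscale_mult_cscale:
  "cscale u x * cscale v y = cscale (u * v) (x * y :: 'a::comm_complex_banach_algebra_1)"
  by (metis cscale_cscale cscale_mult_left mult.commute)

definition eval_fds :: "'a::comm_complex_banach_algebra_1 fds \<Rightarrow> complex \<Rightarrow> 'a" where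
  "eval_fds a s = (\<Sum>n. cscale (of_nat n powr (- s)) (fds_nth a n))"

lemma norm_nat_powr_le_1:
  assumes "s \<in> half_plane" "0 < n"
  shows "cmod (of_nat n powr (- s)) \<le> 1"
proof -
  have "cmod (of_nat n powr (- s)) = real n powr (- Re s)"
    by (subst norm_powr_real_powr) auto
  also have "\<dots> = inverse (real n powr Re s)"
    by (simp add: powr_minus)
  also have "\<dots> \<le> 1"
    using ge_one_powr_ge_zero[of "real n" "Re s"] assms by (auto simp: half_plane_def inverse_le_1_iff)
  finally show ?thesis .
qed

lemma summable_norm_eval_fds:
  assumes "fds_wsummable (\<lambda>_. 1) a" "s \<in> half_plane"
  shows "summable (\<lambda>n. norm (cscale (of_nat n powr (- s)) (fds_nth a n)))"
proof (rule summable_comparison_test'[where N = 0])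
  show "summable (\<lambda>n. norm (fds_nth a n))"
    using assms(1) by (simp add: fds_wsummable_def)
  show "norm (norm (cscale (of_nat n powr (- s)) (fds_nth a n))) \<le> norm (fds_nth a n)" for n
    using norm_nat_powr_le_1[OF assms(2), of n]
    by (cases "n = 0") (simp_all add: norm_cscale mult_left_le_one_le)
qed

lemma eval_fds_mult:
  assumes a: "fds_wsummable (\<lambda>_. 1) a" and b: "fds_wsummable (\<lambda>_. 1) b" and s: "s \<in> half_plane"
  shows "eval_fds (a * b) s = eval_fds a s * eval_fds b s"
proof -
  define x where "x n = cscale (of_nat n powr (- s)) (fds_nth a n)" for n
  define y where "y n = cscale (of_nat n powr (- s)) (fds_nth b n)" for n
  have sums: "dirichlet_conv x y sums (suminf x * suminf y)"
    using summable_norm_eval_fds[OF a s] summable_norm_eval_fds[OF b s]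
    by (intro dirichlet_conv_sums) (simp_all add: x_def y_def)
  have conv: "dirichlet_conv x y n = cscale (of_nat n powr (- s)) (fds_nth (a * b) n)" for n
  proof (cases "n = 0")
    case False
    have "x d * y e = cscale (of_nat n powr (- s)) (fds_nth a d * fds_nth b e)" if "d * e = n" for d e
    proof -
      have "(of_nat n :: complex) powr (- s) = (of_nat d * of_nat e) powr (- s)"
        using that by (metis of_nat_mult)
      also have "\<dots> = of_nat d powr (- s) * of_nat e powr (- s)"
        by (rule powr_times_real) auto
      finally show ?thesis
        by (simp add: x_def y_def cscale_mult_cscale)
    qed
    then show ?thesis
      by (simp add: dirichlet_conv_def fds_nth_mult cscale_sum_right divisor_pairs_def case_prod_beta)
  qed (simp add: x_def y_def)
  show ?thesis
    using sums_unique[OF sums] unfolding conv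
    by (simp add: eval_fds_def x_def[abs_def] y_def[abs_def])
qed

lemma eval_fds_diff:
  assumes "fds_wsummable (\<lambda>_. 1) a" "fds_wsummable (\<lambda>_. 1) b" "s \<in> half_plane"
  shows "eval_fds (a - b) s = eval_fds a s - eval_fds b s"
  unfolding eval_fds_def fds_nth_diff cscale_diff_right
  by (rule suminf_diff[symmetric];
      rule summable_norm_cancel, rule summable_norm_eval_fds) (use assms in auto)

lemma eval_fds_1: "eval_fds 1 s = 1"
proof -
  have "(\<lambda>n. cscale (of_nat n powr (- s)) (fds_nth (1 :: 'a fds) n)) = (\<lambda>n. if n = 1 then 1 else 0)"
    by (auto simp: fds_nth_one cscale_one)
  then show ?thesis
    unfolding eval_fds_def using sums_single[of 1 "\<lambda>_. 1 :: 'a"] by (simp add: sums_iff)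
qed

lemma eval_fds_nat_scaled_sums:
  assumes "fds_wsummable (\<lambda>_. 1) a"
  shows "(\<lambda>n. (real m / real n) ^ k *\<^sub>R fds_nth a n) sums (real m ^ k *\<^sub>R eval_fds a (of_nat k))"
proof -
  have "(\<lambda>n. cscale (of_nat n powr (- of_nat k)) (fds_nth a n)) sums eval_fds a (of_nat k)"
    using summable_norm_eval_fds[OF assms, THEN summable_norm_cancel, of "of_nat k"]
    by (simp add: eval_fds_def half_plane_def summable_sums)
  then have "(\<lambda>n. real m ^ k *\<^sub>R cscale (of_nat n powr (- of_nat k)) (fds_nth a n))
      sums (real m ^ k *\<^sub>R eval_fds a (of_nat k))"
    by (rule sums_scaleR_right)
  moreover have "real m ^ k *\<^sub>R cscale (of_nat n powr (- of_nat k)) (fds_nth a n) =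
      (real m / real n) ^ k *\<^sub>R fds_nth a n" for n
  proof (cases "n = 0")
    case False
    then have powr_eq: "(of_nat n :: complex) powr (- of_nat k) = of_real (inverse (real n ^ k))"
      by (simp add: powr_minus)
    show ?thesis
      unfolding powr_eq scaleR_cscale[symmetric]
      by (simp add: power_mult_distrib power_inverse divide_inverse)
  qed simp
  ultimately show ?thesis
    by simp
qed

lemma scaled_coeff_sum_tendsto_leading_coeff:
  fixes a :: "nat \<Rightarrow> 'a::{real_normed_algebra,banach}"
  assumes "summable (\<lambda>n. norm (a n))" "0 < m" "\<And>n. n < m \<Longrightarrow> a n = 0"
  shows "(\<lambda>k. \<Sum>n. (real m / real n) ^ k *\<^sub>R a n) \<longlonglongrightarrow> a m"
proof -
  have "(\<lambda>k. \<Sum>n. (real m / real n) ^ k *\<^sub>R a n) \<longlonglongrightarrow> (\<Sum>n. if n = m then a m else 0)"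
  proof (rule tannerys_theorem[THEN conjunct2, THEN conjunct2])
    show "(\<lambda>k. (real m / real n) ^ k *\<^sub>R a n) \<longlonglongrightarrow> (if n = m then a m else 0)" for n
    proof -
      consider "n < m" | "n = m" | "m < n"
        by linarith
      then show ?thesis
      proof cases
        case 3
        then have "(\<lambda>k. (real m / real n) ^ k) \<longlonglongrightarrow> 0"
          by (intro LIMSEQ_power_zero) auto
        from tendsto_scaleR[OF this tendsto_const[of "a n"]] show ?thesis
          using 3 by simp
      qed (use assms(2,3) in simp_all)
    qed
    have "norm ((real m / real n) ^ k *\<^sub>R a n) \<le> norm (a n)" for n k
    proof (cases "n < m")
      case False
      then have "(real m / real n) ^ k \<le> 1"
        using assms(2) by (intro power_le_one) (auto simp: divide_le_eq_1)
      then show ?thesis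
        by (simp add: mult_left_le_one_le)
    qed (simp add: assms(3))
    then show "\<forall>\<^sub>F (n, k) in sequentially \<times>\<^sub>F sequentially.
        norm ((real m / real n) ^ k *\<^sub>R a n) \<le> norm (a n)"
      by (intro always_eventually) auto
  qed (use assms(1) in simp_all)
  then show ?thesis
    using sums_single[of m "\<lambda>_. a m"] by (simp add: sums_iff)
qed

lemma fds_eq_0_if_eval_fds_nat_eq_0:
  fixes a :: "'a::comm_complex_banach_algebra_1 fds"
  assumes a: "fds_wsummable (\<lambda>_. 1) a" and zero: "\<And>k::nat. eval_fds a (of_nat k) = 0"
  shows "a = 0"
proof (rule ccontr)
  assume "a \<noteq> 0"
  then have "\<exists>n. fds_nth a n \<noteq> 0"
    using fds_eqI[of a 0] by (metis fds_nth_zero)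
  define m where "m = (LEAST n. fds_nth a n \<noteq> 0)"
  have am: "fds_nth a m \<noteq> 0"
    unfolding m_def by (rule LeastI_ex) fact
  have "0 < m"
    using am by (cases m) auto
  have "fds_nth a n = 0" if "n < m" for n
    using not_less_Least[OF that[unfolded m_def]] by simp
  (* The sums below equal m^k eval_fds a k = 0, yet tend to the leading coefficient. *)
  then have "(\<lambda>k. \<Sum>n. (real m / real n) ^ k *\<^sub>R fds_nth a n) \<longlonglongrightarrow> fds_nth a m"
    using a \<open>0 < m\<close> by (intro scaled_coeff_sum_tendsto_leading_coeff) (simp_all add: fds_wsummable_def)
  moreover have "(\<Sum>n. (real m / real n) ^ k *\<^sub>R fds_nth a n) = 0" for k
    using eval_fds_nat_scaled_sums[OF a, of m k] zero[of k] by (simp add: sums_iff)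
  ultimately show False
    using am by (simp add: LIMSEQ_const_iff)
qed

lemma eval_fds_inject:
  assumes "fds_wsummable (\<lambda>_. 1) a" "fds_wsummable (\<lambda>_. 1) b"
    and "\<forall>s\<in>half_plane. eval_fds a s = eval_fds b s"
  shows "a = b"
proof -
  have "a - b = 0"
  proof (rule fds_eq_0_if_eval_fds_nat_eq_0)
    show "fds_wsummable (\<lambda>_. 1) (a - b)"
      using assms(1,2) by (rule fds_wsummable_diff[OF is_weight_1])
    show "eval_fds (a - b) (of_nat k) = 0" for k
      using assms by (simp add: eval_fds_diff half_plane_def)
  qed
  then show ?thesis
    by simp
qed

lemma dirichlet_alg_iff:
  "f \<in> dirichlet_alg w \<longleftrightarrow> (\<exists>a. fds_wsummable w a \<and> (\<forall>s\<in>half_plane. f s = eval_fds a s))"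
proof
  assume "f \<in> dirichlet_alg w"
  then obtain c where "c 0 = 0" "summable (\<lambda>n. norm (c n) * w n)"
    "\<forall>s\<in>half_plane. f s = (\<Sum>n. cscale (of_nat n powr (- s)) (c n))"
    unfolding dirichlet_alg_def by blast
  then show "\<exists>a. fds_wsummable w a \<and> (\<forall>s\<in>half_plane. f s = eval_fds a s)"
    by (intro exI[of _ "Abs_fds c"]) (simp add: fds_wsummable_def eval_fds_def)
next
  assume "\<exists>a. fds_wsummable w a \<and> (\<forall>s\<in>half_plane. f s = eval_fds a s)"
  then obtain a where "fds_wsummable w a" "\<forall>s\<in>half_plane. f s = eval_fds a s"
    by blast
  then show "f \<in> dirichlet_alg w"
    unfolding dirichlet_alg_def fds_wsummable_def eval_fds_def
    by (intro CollectI exI[of _ "fds_nth a"]) simp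
qed

theorem mainTheorem4:
  fixes \<omega> :: "nat \<Rightarrow> real"
    and f g :: "complex \<Rightarrow> 'a::comm_complex_banach_algebra_1"
  assumes "admissible_weight \<omega>"
    and "f \<in> dirichlet_alg \<omega>"
    and "g \<in> dirichlet_alg1"
    and "\<forall>s\<in>half_plane. f s * g s = 1"
  shows "g \<in> dirichlet_alg \<omega>"
proof -
  obtain F where F: "fds_wsummable \<omega> F" and f: "\<forall>s\<in>half_plane. f s = eval_fds F s"
    using assms(2) by (auto simp: dirichlet_alg_iff)
  obtain G where G: "fds_wsummable (\<lambda>_. 1) G" and g: "\<forall>s\<in>half_plane. g s = eval_fds G s"
    using assms(3) by (auto simp: dirichlet_alg1_def dirichlet_alg_iff)
  have F1: "fds_wsummable (\<lambda>_. 1) F"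
    using assms(1) F by (intro fds_wsummable_unweighted) (simp_all add: admissible_weight_def)
  have "F * G = 1"
  proof (rule eval_fds_inject)
    show "fds_wsummable (\<lambda>_. 1) (F * G)"
      by (rule fds_wsummable_mult[OF is_weight_1 F1 G])
    show "fds_wsummable (\<lambda>_. 1) (1 :: 'a fds)"
      by (rule fds_wsummable_1)
    show "\<forall>s\<in>half_plane. eval_fds (F * G) s = eval_fds 1 s"
      using assms(4) f g by (simp add: eval_fds_mult[OF F1 G] eval_fds_1)
  qed
  then have "fds_wsummable \<omega> G"
    by (rule fds_wsummable_inverse[OF assms(1) F G])
  then show ?thesis
    using g by (auto simp: dirichlet_alg_iff)
qed

end
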